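(* Let $\ell$ be an even positive integer and $w$ an $\ell$-perfect word over $\{0,1\}$. Then there exists an $\ell$-perfect word $z$ over $\{0,1\}$ of length $2|w|$ such that $\mathrm{even}(z)=w$.
   Context: For a finite word $z=a_1\cdots a_m$, $\mathrm{even}(z)=a_2a_4\cdots$. For words $w,u$, $|w|^{al}_u=|\{i: w[i..i+|u|-1]=u,\ i\equiv1\bmod|u|\}|$. A finite binary word $w$ is $\ell$-perfect if $|w|$ is a multiple of $\ell$ and every word $u$ of length $\ell$ satisfies $|w|^{al}_u=|w|/(\ell2^\ell)$. *)

theory Defs
  imports Main Complex_Main
begin

text \<open>Binary words are lists of booleans (False = 0, True = 1); positions in the
paper are 1-based, list indices are 0-based.\<close>

text \<open>even(a_1 ... a_m) = a_2 a_4 ...: the letters at 1-based even positions,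
i.e. at 0-based odd indices.\<close>
definition even_part :: "bool list \<Rightarrow> bool list" where
  "even_part z = map (\<lambda>i. z ! i) (filter odd [0..<length z])"

text \<open>Aligned occurrences: 1-based start positions i with i = 1 mod |u|,
i.e. 0-based start indices divisible by |u|, whose window fits in w.\<close>
definition aligned_count :: "bool list \<Rightarrow> bool list \<Rightarrow> nat" where
  "aligned_count w u = card {i. i + length u \<le> length w \<and> i mod length u = 0
                              \<and> take (length u) (drop i w) = u}"

definition perfect :: "nat \<Rightarrow> bool list \<Rightarrow> bool" where
  "perfect l w \<longleftrightarrow> l dvd length w \<and>
     (\<forall>u. length u = l \<longrightarrow> real (aligned_count w u) = real (length w) / (real l * 2 ^ l))"

end

theory Submission
  imports Defs
begin

text \<open>Cut w into aligned blocks x = a b with |a| = |b| = l/2 and replace each block by the two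
blocks splice b a and splice a b (letters of the two halves interleaved). Their even parts are
a and b, so even(z) = w. Both maps a b \<mapsto> splice b a and a b \<mapsto> splice a b permute the words of
length l, so every u occurs among the aligned blocks of z exactly as often as its two preimages
occur among those of w, i.e. twice the common frequency.\<close>

definition odd_part :: "'a list \<Rightarrow> 'a list" where
  "odd_part z = map (\<lambda>i. z ! i) (filter even [0..<length z])"

lemma even_part_Nil [simp]: "even_part [] = []"
  by (simp add: even_part_def)

lemma odd_part_Nil [simp]: "odd_part [] = []"
  by (simp add: odd_part_def)

lemma even_part_Cons [simp]: "even_part (x # z) = odd_part z"
  by (simp add: even_part_def odd_part_def upt_conv_Cons map_Suc_upt[symmetric] filter_map comp_def
      del: upt_Suc)

lemma odd_part_Cons [simp]: "odd_part (x # z) = x # even_part z"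
  by (simp add: even_part_def odd_part_def upt_conv_Cons map_Suc_upt[symmetric] filter_map comp_def
      del: upt_Suc)

lemma length_even_odd_part:
  "length (even_part z) = length z div 2 \<and> length (odd_part z) = (length z + 1) div 2"
  by (induction z) auto

lemma even_part_splice: "length a = length b \<Longrightarrow> even_part (splice a b) = b"
  and odd_part_splice: "length a = length b \<Longrightarrow> odd_part (splice a b) = a"
  by (induction a b rule: list_induct2) simp_all

lemma splice_odd_part_even_part: "splice (odd_part z) (even_part z) = z"
  by (induction z) simp_all

lemma even_part_append: "even (length x) \<Longrightarrow> even_part (x @ y) = even_part x @ even_part y"
  by (induction x rule: induct_list012) simp_all

lemma aligned_count_Nil: "0 < length u \<Longrightarrow> aligned_count [] u = 0"
  by (simp add: aligned_count_def)

lemma aligned_count_append_block: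
  assumes "length x = length u" "0 < length u"
  shows "aligned_count (x @ r) u = of_bool (x = u) + aligned_count r u"
proof -
  let ?l = "length u"
  let ?S = "\<lambda>v. {i. i + ?l \<le> length v \<and> i mod ?l = 0 \<and> take ?l (drop i v) = u}"
  have "?S (x @ r) = (if x = u then {0} else {}) \<union> (\<lambda>i. i + ?l) ` ?S r"
  proof (rule set_eqI)
    fix i
    show "i \<in> ?S (x @ r) \<longleftrightarrow> i \<in> (if x = u then {0} else {}) \<union> (\<lambda>i. i + ?l) ` ?S r"
    proof (cases "i < ?l")
      case True
      then show ?thesis using assms by (auto simp: image_iff)
    next
      case False
      then obtain j where "i = j + ?l" by (metis add.commute le_iff_add not_less)
      then show ?thesis using assms by (auto simp: image_iff)
    qed
  qed
  moreover have "0 \<notin> (\<lambda>i. i + ?l) ` ?S r" using assms by auto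
  moreover have "finite (?S r)" by (rule finite_subset[of _ "{..length r}"]) auto
  ultimately show ?thesis
    unfolding aligned_count_def by (simp add: card_image inj_on_def)
qed

lemma aligned_count_concat:
  assumes "0 < length u" "\<forall>x\<in>set xs. length x = length u"
  shows "aligned_count (concat xs) u = count_list xs u"
  using assms(2)
proof (induction xs)
  case Nil
  show ?case using aligned_count_Nil[OF assms(1)] by simp
next
  case (Cons x xs)
  then show ?case using aligned_count_append_block[OF _ assms(1)] by simp
qed

lemma concat_chunks_exists:
  assumes "0 < l" "l dvd length w"
  shows "\<exists>ws. concat ws = w \<and> (\<forall>x\<in>set ws. length x = l)"
  using assms(2)
proof (induction "length w div l" arbitrary: w)
  case 0
  then have "w = []" using assms(1) by (auto elim: dvdE)
  then show ?case by (intro exI[of _ "[]"]) simp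
next
  case (Suc n)
  have "l \<le> length w"
    using Suc.hyps(2) by (metis div_less nat.distinct(1) not_le)
  then have "l dvd length (drop l w)" and "n = length (drop l w) div l"
    using Suc.prems Suc.hyps(2) assms(1) by (simp_all add: le_div_geq)
  then obtain ws where "concat ws = drop l w" "\<forall>x\<in>set ws. length x = l"
    using Suc.hyps(1) by blast
  moreover have "length (take l w) = l"
    using \<open>l \<le> length w\<close> by simp
  ultimately show ?case by (intro exI[of _ "take l w # ws"]) simp
qed

lemma perfect_concat_iff:
  assumes "0 < l" "\<forall>x\<in>set xs. length x = l"
  shows "perfect l (concat xs) \<longleftrightarrow>
         (\<forall>u. length u = l \<longrightarrow> real (count_list xs u) = real (length xs) / 2 ^ l)"
proof -
  have "length (concat xs) = l * length xs"
    using assms(2) by (induction xs) simp_all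
  then show ?thesis
    using assms by (simp add: perfect_def aligned_count_concat)
qed

lemma count_list_map_inj_on:
  "inj_on f (insert v (set xs)) \<Longrightarrow> count_list (map f xs) (f v) = count_list xs v"
  by (induction xs) (auto simp: inj_on_def)

lemma count_list_map_bij_betw:
  assumes "bij_betw f A B" "set xs \<subseteq> A" "u \<in> B"
  shows "count_list (map f xs) u = count_list xs (inv_into A f u)"
proof -
  have "f (inv_into A f u) = u" "inv_into A f u \<in> A"
    using assms by (auto simp: bij_betw_inv_into_right bij_betw_def inv_into_into)
  then show ?thesis
    using count_list_map_inj_on[of f "inv_into A f u" xs] assms(1,2)
    by (metis bij_betw_def inj_on_subset insert_subset)
qed

lemma perfect_concat_map_append:
  assumes "0 < l" "\<forall>x\<in>set xs. length x = l" "perfect l (concat xs)"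
    and f: "bij_betw f {x. length x = l} {x. length x = l}"
    and g: "bij_betw g {x. length x = l} {x. length x = l}"
  shows "perfect l (concat (map (\<lambda>x. f x @ g x) xs))"
proof -
  let ?L = "{x. length x = l}"
  let ?ys = "concat (map (\<lambda>x. [f x, g x]) xs)"
  have sub: "set xs \<subseteq> ?L" using assms(2) by auto
  have ys: "\<forall>y\<in>set ?ys. length y = l"
    using assms(2) f g by (auto simp: bij_betw_def)
  have xs: "real (count_list xs v) = real (length xs) / 2 ^ l" if "v \<in> ?L" for v
    using assms(3) perfect_concat_iff[OF assms(1,2)] that by simp
  have "real (count_list ?ys u) = real (length ?ys) / 2 ^ l" if u: "u \<in> ?L" for u
  proof -
    have "count_list ?ys u = count_list (map f xs) u + count_list (map g xs) u"
      by (induction xs) simp_all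
    also have "\<dots> = count_list xs (inv_into ?L f u) + count_list xs (inv_into ?L g u)"
      using count_list_map_bij_betw[OF f sub u] count_list_map_bij_betw[OF g sub u] by simp
    finally have count: "count_list ?ys u = \<dots>" .
    have "inv_into ?L f u \<in> ?L" "inv_into ?L g u \<in> ?L"
      using f g u by (metis bij_betw_def inv_into_into)+
    then have "real (count_list ?ys u) = 2 * (real (length xs) / 2 ^ l)"
      using count xs by simp
    moreover have "length ?ys = 2 * length xs"
      by (induction xs) simp_all
    ultimately show ?thesis by simp
  qed
  moreover have "concat (map (\<lambda>x. f x @ g x) xs) = concat ?ys"
    by (induction xs) simp_all
  ultimately show ?thesis
    using perfect_concat_iff[OF assms(1) ys] by simp
qed

lemma bij_betw_splice_halves:
  "bij_betw (\<lambda>x. splice (take h x) (drop h x)) {x :: bool list. length x = 2 * h}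
     {x. length x = 2 * h}"
  by (rule bij_betw_byWitness[where f' = "\<lambda>y. odd_part y @ even_part y"])
     (auto simp: even_part_splice odd_part_splice splice_odd_part_even_part length_even_odd_part)

lemma bij_betw_splice_swapped_halves:
  "bij_betw (\<lambda>x. splice (drop h x) (take h x)) {x :: bool list. length x = 2 * h}
     {x. length x = 2 * h}"
  by (rule bij_betw_byWitness[where f' = "\<lambda>y. even_part y @ odd_part y"])
     (auto simp: even_part_splice odd_part_splice splice_odd_part_even_part length_even_odd_part)

lemma even_part_concat:
  "\<forall>x\<in>set xs. even (length x) \<Longrightarrow> even_part (concat xs) = concat (map even_part xs)"
  by (induction xs) (simp_all add: even_part_append)

theorem corollary11:
  fixes l :: nat and w :: "bool list"
  assumes "l > 0" and "even l" and "perfect l w"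
  shows "\<exists>z. perfect l z \<and> length z = 2 * length w \<and> even_part z = w"
proof -
  obtain h where l: "l = 2 * h" using assms(2) by blast
  obtain ws where w: "concat ws = w" and ws: "\<forall>x\<in>set ws. length x = l"
    using concat_chunks_exists[OF assms(1)] assms(3) by (auto simp: perfect_def)
  let ?block = "\<lambda>x. splice (drop h x) (take h x) @ splice (take h x) (drop h x)"
  let ?z = "concat (map ?block ws)"
  have "perfect l ?z"
    using perfect_concat_map_append[OF assms(1) ws] assms(3) w l
      bij_betw_splice_halves bij_betw_splice_swapped_halves by simp
  moreover have "length ?z = 2 * length w"
    using ws l w by (induction ws arbitrary: w) auto
  moreover have "even_part ?z = w"
    using ws l w by (simp add: even_part_concat even_part_append even_part_splice map_idI)
  ultimately show ?thesis by blast
qed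

end
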